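(* Let $\omega$ be a weight on $\mathbb N^2$, and let $(r_i)$, $(s_i)$ be sequences of positive real numbers such that $$r_{i_1}^{\alpha_1}\cdots r_{i_k}^{\alpha_k}s_{i_1}^{\beta_1}\cdots s_{i_k}^{\beta_k}\le\omega\big(p_{i_1}^{\alpha_1}\cdots p_{i_k}^{\alpha_k},\,p_{i_1}^{\beta_1}\cdots p_{i_k}^{\beta_k}\big)$$ whenever $k\in\mathbb N$, the $p_{i_j}$ are distinct primes and $\alpha_j,\beta_j\in\mathbb N_0$. Then, under the identification of $\Delta(\ell^1(\mathbb N^2,\omega))$ with pairs of complex sequences, $$\prod_{i=1}^\infty\overline{B(0,r_i)}\times\prod_{i=1}^\infty\overline{B(0,s_i)}\subset\Delta(\ell^1(\mathbb N^2,\omega))\subset\prod_{i=1}^\infty\overline{B(0,\rho_i)}\times\prod_{i=1}^\infty\overline{B(0,\mu_i)}.$$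
   Context: $\mathbb N_0=\mathbb N\cup\{0\}$; $p_1<p_2<\cdots$ are the primes in increasing order; $\overline{B(a,r)}=\{z\in\mathbb C:|z-a|\le r\}$. A weight on $\mathbb N^2$ (semigroup under coordinatewise multiplication) is $\omega:\mathbb N^2\to[1,\infty)$ with $\omega(xy)\le\omega(x)\omega(y)$. $\rho_i=\lim_{n\to\infty}\omega(p_i^n,1)^{1/n}=\inf_n\omega(p_i^n,1)^{1/n}$ and $\mu_i=\lim_{n\to\infty}\omega(1,p_i^n)^{1/n}=\inf_n\omega(1,p_i^n)^{1/n}$. $\ell^1(\mathbb N^2,\omega)$ is the weighted convolution algebra $\{a:\sum|a(m,n)|\omega(m,n)<\infty\}$ with $(a\star b)(m,n)=\sum_{u_1u_2=m,v_1v_2=n}a(u_1,v_1)b(u_2,v_2)$. Its Gel'fand space $\Delta(\ell^1(\mathbb N^2,\omega))$ is identified with the set of $\omega$-bounded semicharacters $\chi$ (nonzero multiplicative maps $\mathbb N^2\to\mathbb C$ with $|\chi|\le\omega$), and each such $\chi$ is identified with the pair of sequences $((\chi(p_i,1))_i,(\chi(1,p_i))_i)\in\mathbb C^{\mathbb N}\times\mathbb C^{\mathbb N}$; a pair of sequences lies in $\Delta$ iff the semicharacter it determines is $\omega$-bounded. *)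

theory Defs
  imports "HOL-Analysis.Analysis" "HOL-Computational_Algebra.Primes" "HOL-Library.Infinite_Set"
begin

text \<open>The i-th prime, 0-based: nthp 0 = 2 = p_1, nthp i = p_(i+1).\<close>
definition nthp :: "nat \<Rightarrow> nat" where
  "nthp i = enumerate {p. prime p} i"

definition N2 :: "(nat \<times> nat) set" where
  "N2 = {(m, n). m \<ge> 1 \<and> n \<ge> 1}"

definition pmul :: "nat \<times> nat \<Rightarrow> nat \<times> nat \<Rightarrow> nat \<times> nat" where
  "pmul x y = (fst x * fst y, snd x * snd y)"

definition is_weight :: "(nat \<times> nat \<Rightarrow> real) \<Rightarrow> bool" where
  "is_weight w \<longleftrightarrow> (\<forall>x\<in>N2. w x \<ge> 1) \<and>
     (\<forall>x\<in>N2. \<forall>y\<in>N2. w (pmul x y) \<le> w x * w y)"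

definition semicharacter :: "(nat \<times> nat \<Rightarrow> complex) \<Rightarrow> bool" where
  "semicharacter c \<longleftrightarrow> (\<exists>x\<in>N2. c x \<noteq> 0) \<and>
     (\<forall>x\<in>N2. \<forall>y\<in>N2. c (pmul x y) = c x * c y)"

definition bounded_semichar :: "(nat \<times> nat \<Rightarrow> real) \<Rightarrow> (nat \<times> nat \<Rightarrow> complex) \<Rightarrow> bool" where
  "bounded_semichar w c \<longleftrightarrow> semicharacter c \<and> (\<forall>x\<in>N2. cmod (c x) \<le> w x)"

text \<open>Gelfand space, identified with pairs of sequences (0-based indexing).\<close>
definition Delta :: "(nat \<times> nat \<Rightarrow> real) \<Rightarrow> ((nat \<Rightarrow> complex) \<times> (nat \<Rightarrow> complex)) set" where
  "Delta w = {((\<lambda>i. c (nthp i, 1)), (\<lambda>i. c (1, nthp i))) | c. bounded_semichar w c}"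

definition rho :: "(nat \<times> nat \<Rightarrow> real) \<Rightarrow> nat \<Rightarrow> real" where
  "rho w i = (INF n\<in>{1..}. w (nthp i ^ n, 1) powr (1 / real n))"

definition mu :: "(nat \<times> nat \<Rightarrow> real) \<Rightarrow> nat \<Rightarrow> real" where
  "mu w i = (INF n\<in>{1..}. w (1, nthp i ^ n) powr (1 / real n))"

end

theory Submission
  imports Defs
begin

text \<open>
  Every pair of sequences \<open>(a, b)\<close> extends uniquely to a semicharacter, namely
  \<open>\<chi>(m, n) = \<Prod>\<^sub>i a\<^sub>i^\<alpha>\<^sub>i b\<^sub>i^\<beta>\<^sub>i\<close> where \<open>\<alpha>\<^sub>i, \<beta>\<^sub>i\<close> are the multiplicities of \<open>p\<^sub>i\<close> in \<open>m, n\<close>.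
  If \<open>|a\<^sub>i| \<le> r\<^sub>i\<close> and \<open>|b\<^sub>i| \<le> s\<^sub>i\<close>, then \<open>|\<chi>(m, n)| \<le> \<Prod>\<^sub>i r\<^sub>i^\<alpha>\<^sub>i s\<^sub>i^\<beta>\<^sub>i \<le> \<omega>(m, n)\<close> by the
  hypothesis on \<open>r, s\<close>. Conversely, an \<open>\<omega>\<close>-bounded semicharacter satisfies
  \<open>|\<chi>(p\<^sub>i, 1)|\<^sup>n = |\<chi>(p\<^sub>i\<^sup>n, 1)| \<le> \<omega>(p\<^sub>i\<^sup>n, 1)\<close> for all \<open>n \<ge> 1\<close>; taking \<open>n\<close>-th roots and
  the infimum over \<open>n\<close> gives \<open>|\<chi>(p\<^sub>i, 1)| \<le> \<rho>\<^sub>i\<close>, and likewise \<open>|\<chi>(1, p\<^sub>i)| \<le> \<mu>\<^sub>i\<close>.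
\<close>

lemma nthp_prime: "prime (nthp i)"
  unfolding nthp_def using enumerate_in_set[OF primes_infinite] by auto

lemma strict_mono_nthp: "strict_mono nthp"
  unfolding nthp_def strict_mono_def using enumerate_mono[OF _ primes_infinite] by blast

lemma le_nthp: "i \<le> nthp i"
  using strict_mono_imp_increasing[OF strict_mono_nthp] .

lemma inj_nthp: "inj nthp"
  using strict_mono_imp_inj_on[OF strict_mono_nthp] .

lemma nthp_pos: "0 < nthp i"
  using nthp_prime prime_gt_0_nat by blast

lemma prime_eq_nthp: "prime p \<Longrightarrow> \<exists>j. p = nthp j"
  using bij_betw_imp_surj_on[OF bij_enumerate[OF primes_infinite]] unfolding nthp_def
  by (metis (mono_tags, lifting) imageE mem_Collect_eq)

lemma multiplicity_nthp_eq_0: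
  assumes "0 < m" "m < i"
  shows "multiplicity (nthp i) (m::nat) = 0"
proof (rule not_dvd_imp_multiplicity_0)
  have "m < nthp i" using le_nthp[of i] assms by linarith
  then show "\<not> nthp i dvd m" using assms by (meson dvd_imp_le not_le)
qed

definition mult_ext :: "(nat \<Rightarrow> 'a::comm_monoid_mult) \<Rightarrow> nat \<Rightarrow> 'a" where
  "mult_ext f m = (\<Prod>i\<le>m. f i ^ multiplicity (nthp i) m)"

lemma mult_ext_eq_prod_lessThan:
  assumes "0 < m" "m < K"
  shows "mult_ext f m = (\<Prod>i<K. f i ^ multiplicity (nthp i) m)"
  unfolding mult_ext_def
  by (rule prod.mono_neutral_left) (use assms in \<open>auto simp: multiplicity_nthp_eq_0\<close>)

lemma mult_ext_mult:
  assumes "0 < m" "0 < n"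
  shows "mult_ext f (m * n) = mult_ext f m * mult_ext f n"
proof -
  define K where "K = m * n + 1"
  have K: "m < K" "n < K" "m * n < K"
    using assms by (auto simp: K_def less_Suc_eq_le)
  show ?thesis
    using assms K nthp_prime
    by (simp add: mult_ext_eq_prod_lessThan prime_elem_multiplicity_mult_distrib
        power_add prod.distrib)
qed

lemma mult_ext_nthp: "mult_ext f (nthp i) = f i"
proof -
  have "mult_ext f (nthp i) = (\<Prod>j\<in>{i}. f j ^ multiplicity (nthp j) (nthp i))"
    unfolding mult_ext_def
    by (rule prod.mono_neutral_right)
      (use le_nthp[of i] inj_nthp nthp_prime in \<open>auto simp: prime_multiplicity_other inj_eq\<close>)
  then show ?thesis using nthp_prime by simp
qed

lemma mult_ext_nthp_self:
  assumes "0 < m"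
  shows "mult_ext nthp m = m"
proof -
  have "mult_ext nthp m = (\<Prod>p\<in>nthp ` {..m}. p ^ multiplicity p m)"
    unfolding mult_ext_def by (subst prod.reindex) (auto intro: inj_on_subset[OF inj_nthp])
  also have "\<dots> = (\<Prod>p\<in>prime_factors m. p ^ multiplicity p m)"
  proof (rule prod.mono_neutral_right)
    show "prime_factors m \<subseteq> nthp ` {..m}"
    proof
      fix p assume "p \<in> prime_factors m"
      then have "prime p" "p \<le> m"
        using assms by (auto simp: in_prime_factors_iff dvd_imp_le)
      moreover obtain j where "p = nthp j" using prime_eq_nthp \<open>prime p\<close> by blast
      ultimately show "p \<in> nthp ` {..m}" using le_nthp[of j] by auto
    qed
    show "\<forall>p\<in>nthp ` {..m} - prime_factors m. p ^ multiplicity p m = 1"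
      using assms nthp_prime by (auto simp: in_prime_factors_iff not_dvd_imp_multiplicity_0)
  qed auto
  also have "\<dots> = m" using prime_factorization_nat[OF assms] by simp
  finally show ?thesis .
qed

lemma norm_mult_ext_le:
  fixes a :: "nat \<Rightarrow> 'a::real_normed_field"
  assumes "\<And>i. norm (a i) \<le> r i"
  shows "norm (mult_ext a m) \<le> mult_ext r m"
  unfolding mult_ext_def prod_norm[symmetric] norm_power
proof (rule prod_mono)
  fix i
  show "0 \<le> norm (a i) ^ multiplicity (nthp i) m \<and>
        norm (a i) ^ multiplicity (nthp i) m \<le> r i ^ multiplicity (nthp i) m"
    using assms[of i] by (simp add: power_mono)
qed

definition semichar_of :: "(nat \<Rightarrow> complex) \<Rightarrow> (nat \<Rightarrow> complex) \<Rightarrow> nat \<times> nat \<Rightarrow> complex" where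
  "semichar_of a b = (\<lambda>(m, n). mult_ext a m * mult_ext b n)"

lemma semicharacter_semichar_of: "semicharacter (semichar_of a b)"
  unfolding semicharacter_def
proof (intro conjI ballI)
  show "\<exists>x\<in>N2. semichar_of a b x \<noteq> 0"
    by (rule bexI[of _ "(1, 1)"]) (auto simp: semichar_of_def mult_ext_def N2_def)
  fix x y assume "x \<in> N2" "y \<in> N2"
  then show "semichar_of a b (pmul x y) = semichar_of a b x * semichar_of a b y"
    by (auto simp: semichar_of_def pmul_def N2_def mult_ext_mult mult_ac)
qed

lemma semichar_of_nthp: "semichar_of a b (nthp i, 1) = a i" "semichar_of a b (1, nthp i) = b i"
  by (simp_all add: semichar_of_def mult_ext_nthp) (simp_all add: mult_ext_def)

lemma norm_semichar_of_le_weight: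
  assumes ab: "\<And>i. cmod (a i) \<le> r i" "\<And>i. cmod (b i) \<le> s i"
    and rs: "\<And>I \<alpha> \<beta>. finite I \<Longrightarrow> I \<noteq> {} \<Longrightarrow>
           (\<Prod>i\<in>I. r i ^ \<alpha> i * s i ^ \<beta> i)
             \<le> w (\<Prod>i\<in>I. nthp i ^ \<alpha> i, \<Prod>i\<in>I. nthp i ^ \<beta> i)"
    and "0 < m" "0 < n"
  shows "cmod (semichar_of a b (m, n)) \<le> w (m, n)"
proof -
  define K where "K = m + n + 1"
  have K: "m < K" "n < K" using \<open>0 < m\<close> \<open>0 < n\<close> by (auto simp: K_def)
  define \<alpha> where "\<alpha> i = multiplicity (nthp i) m" for i
  define \<beta> where "\<beta> i = multiplicity (nthp i) n" for i
  have "cmod (semichar_of a b (m, n)) = cmod (mult_ext a m) * cmod (mult_ext b n)"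
    by (simp add: semichar_of_def norm_mult)
  also have "\<dots> \<le> mult_ext r m * mult_ext s n"
    using ab by (intro mult_mono norm_mult_ext_le order_trans[OF norm_ge_zero norm_mult_ext_le]) auto
  also have "\<dots> = (\<Prod>i<K. r i ^ \<alpha> i * s i ^ \<beta> i)"
    using \<open>0 < m\<close> \<open>0 < n\<close> K
    by (simp add: mult_ext_eq_prod_lessThan prod.distrib \<alpha>_def \<beta>_def)
  also have "\<dots> \<le> w (\<Prod>i<K. nthp i ^ \<alpha> i, \<Prod>i<K. nthp i ^ \<beta> i)"
    using rs[of "{..<K}" \<alpha> \<beta>] K by auto
  also have "\<dots> = w (m, n)"
    using \<open>0 < m\<close> \<open>0 < n\<close> K
    by (simp add: \<alpha>_def \<beta>_def mult_ext_eq_prod_lessThan[symmetric] mult_ext_nthp_self)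
  finally show ?thesis .
qed

lemma semicharacter_power:
  assumes "semicharacter c" "(q, t) \<in> N2" "1 \<le> n"
  shows "c (q ^ n, t ^ n) = c (q, t) ^ n"
  using \<open>1 \<le> n\<close>
proof (induction n rule: dec_induct)
  case (step k)
  have "c (q ^ Suc k, t ^ Suc k) = c (pmul (q, t) (q ^ k, t ^ k))" by (simp add: pmul_def)
  also have "\<dots> = c (q, t) * c (q ^ k, t ^ k)"
    using assms(1,2) unfolding semicharacter_def by (auto simp: N2_def)
  finally show ?case using step.IH by simp
qed simp

lemma norm_le_INF_root:
  assumes "\<And>n. 1 \<le> n \<Longrightarrow> norm z ^ n \<le> v n"
  shows "norm z \<le> (INF n\<in>{1..}. v n powr (1 / real n))"
proof (rule cINF_greatest)
  fix n :: nat assume n: "n \<in> {1..}"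
  have "norm z = (norm z ^ n) powr (1 / real n)"
    using n by (cases "z = 0") (auto simp: powr_realpow[symmetric] powr_powr)
  also have "\<dots> \<le> v n powr (1 / real n)"
    using assms[of n] n by (intro powr_mono2) auto
  finally show "norm z \<le> v n powr (1 / real n)" .
qed auto

lemma bounded_semichar_le_rho_mu:
  assumes "bounded_semichar w c"
  shows "cmod (c (nthp i, 1)) \<le> rho w i" "cmod (c (1, nthp i)) \<le> mu w i"
proof -
  have c: "semicharacter c" "\<And>x. x \<in> N2 \<Longrightarrow> cmod (c x) \<le> w x"
    using assms unfolding bounded_semichar_def by auto
  have p: "(nthp i, 1) \<in> N2" "(1, nthp i) \<in> N2" "\<And>n. (nthp i ^ n, 1) \<in> N2" "\<And>n. (1, nthp i ^ n) \<in> N2"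
    using nthp_pos[of i] by (auto simp: N2_def)
  show "cmod (c (nthp i, 1)) \<le> rho w i"
    unfolding rho_def
    using c semicharacter_power[OF c(1) p(1)] p by (intro norm_le_INF_root) (metis norm_power power_one)
  show "cmod (c (1, nthp i)) \<le> mu w i"
    unfolding mu_def
    using c semicharacter_power[OF c(1) p(2)] p by (intro norm_le_INF_root) (metis norm_power power_one)
qed

theorem mainTheorem5:
  fixes w :: "nat \<times> nat \<Rightarrow> real" and r s :: "nat \<Rightarrow> real"
  assumes "is_weight w"
    and "\<And>i. r i > 0" and "\<And>i. s i > 0"
    and "\<And>I \<alpha> \<beta>. finite I \<Longrightarrow> I \<noteq> {} \<Longrightarrow>
           (\<Prod>i\<in>I. r i ^ \<alpha> i * s i ^ \<beta> i)
             \<le> w (\<Prod>i\<in>I. nthp i ^ \<alpha> i, \<Prod>i\<in>I. nthp i ^ \<beta> i)"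
  shows "{(a, b). \<forall>i. cmod (a i) \<le> r i \<and> cmod (b i) \<le> s i} \<subseteq> Delta w
         \<and> Delta w \<subseteq> {(a, b). \<forall>i. cmod (a i) \<le> rho w i \<and> cmod (b i) \<le> mu w i}"
proof
  show "{(a, b). \<forall>i. cmod (a i) \<le> r i \<and> cmod (b i) \<le> s i} \<subseteq> Delta w"
  proof clarify
    fix a b assume ab: "\<forall>i. cmod (a i) \<le> r i \<and> cmod (b i) \<le> s i"
    have "cmod (semichar_of a b (m, n)) \<le> w (m, n)" if "(m, n) \<in> N2" for m n
      using that ab by (intro norm_semichar_of_le_weight[OF _ _ assms(4)]) (auto simp: N2_def)
    then have "bounded_semichar w (semichar_of a b)"
      unfolding bounded_semichar_def using semicharacter_semichar_of by auto
    moreover have "a = (\<lambda>i. semichar_of a b (nthp i, 1))" "b = (\<lambda>i. semichar_of a b (1, nthp i))"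
      unfolding semichar_of_nthp by simp_all
    ultimately show "(a, b) \<in> Delta w"
      unfolding Delta_def by blast
  qed
  show "Delta w \<subseteq> {(a, b). \<forall>i. cmod (a i) \<le> rho w i \<and> cmod (b i) \<le> mu w i}"
    unfolding Delta_def using bounded_semichar_le_rho_mu by blast
qed

end
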